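(* Let $\Gamma$ be a finite simple graph with a linear order on $V(\Gamma)$, and let $g_1,g_2\in G(\Gamma)$ be such that $g_1g_2$ is geodesic, i.e. $|g_1g_2|=|g_1|+|g_2|$. (i) If $g_2$ is SD-conical, then $\sigma(g_1g_2)\equiv\sigma(g_1)\sigma(g_2)$. (ii) If $g_1$ is SD-conical and strongly non-split, then $g_1g_2$ is also SD-conical and strongly non-split.
   Context: $G(\Gamma)=\langle v\in V(\Gamma)\mid [v_i,v_j]=1 \text{ if } \{v_i,v_j\}\notin E(\Gamma)\rangle$. $|g|$ is word length; a reduced word is a shortest representative; $\mathrm{supp}(g)$ is the set of generators $v$ with $v^{\pm1}$ appearing in a reduced word for $g$; $w_1\equiv w_2$ means equality of words letter by letter. $g_1,g_2$ disjointly commute if their supports are disjoint and each $v_1\in\mathrm{supp}(g_1)$ commutes with each $v_2\in\mathrm{supp}(g_2)$ (i.e. $\{v_1,v_2\}\notin E(\Gamma)$). $g$ is non-split if $\mathrm{supp}(g)$ spans a connected subgraph; strongly non-split if non-split and no generator disjointly commutes with $g$. $S(g)$ is the set of $v\in V(\Gamma)$ such that some reduced word for $g$ begins with $v$ or $v^{-1}$. $g$ is conical if $S(g)$ is a single generator $v_0$, called its apex. A conical $g$ is SD-conical if its apex $v_0$ does not commute with any generator smaller than $v_0$, i.e. $v<v_0$ implies $\{v,v_0\}\in E(\Gamma)$. CGW-normal form: a reduced word $w\equiv v_{i_1}^{\epsilon_1}\cdots v_{i_k}^{\epsilon_k}$ representing $g$ is initially normal if it is empty or $v_{i_1}$ is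 the largest element of $S(g)$; it is normal if all its suffixes are initially normal. Every $g$ has a unique normal representative word, denoted $\sigma(g)$. *)

theory Defs
  imports Main
begin

(* Letters: (v, True) = v, (v, False) = v^{-1}.
   G(Gamma) = < V | [v_i,v_j] = 1 if {v_i,v_j} not an edge >.
   Group elements are represented by words over V; two words represent the same
   element iff they are related by raag_eqv. *)

type_synonym 'a letter = "'a \<times> bool"

definition inv_letter :: "'a letter \<Rightarrow> 'a letter" where
  "inv_letter x = (fst x, \<not> snd x)"

definition word_over :: "'a set \<Rightarrow> 'a letter list \<Rightarrow> bool" where
  "word_over V w \<longleftrightarrow> fst ` set w \<subseteq> V"

definition raag_step :: "'a set \<Rightarrow> ('a \<Rightarrow> 'a \<Rightarrow> bool) \<Rightarrow> 'a letter list \<Rightarrow> 'a letter list \<Rightarrow> bool" where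
  "raag_step V E u w \<longleftrightarrow>
     (\<exists>p q x. fst x \<in> V \<and> u = p @ [x, inv_letter x] @ q \<and> w = p @ q) \<or>
     (\<exists>p q a b. fst a \<noteq> fst b \<and> \<not> E (fst a) (fst b) \<and>
                u = p @ [a, b] @ q \<and> w = p @ [b, a] @ q)"

definition raag_eqv :: "'a set \<Rightarrow> ('a \<Rightarrow> 'a \<Rightarrow> bool) \<Rightarrow> 'a letter list \<Rightarrow> 'a letter list \<Rightarrow> bool" where
  "raag_eqv V E = (\<lambda>u w. raag_step V E u w \<or> raag_step V E w u)\<^sup>*\<^sup>*"

definition wlen :: "'a set \<Rightarrow> ('a \<Rightarrow> 'a \<Rightarrow> bool) \<Rightarrow> 'a letter list \<Rightarrow> nat" where
  "wlen V E w = (LEAST n. \<exists>u. word_over V u \<and> raag_eqv V E w u \<and> length u = n)"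

definition reduced :: "'a set \<Rightarrow> ('a \<Rightarrow> 'a \<Rightarrow> bool) \<Rightarrow> 'a letter list \<Rightarrow> bool" where
  "reduced V E w \<longleftrightarrow> word_over V w \<and> length w = wlen V E w"

definition supp :: "'a set \<Rightarrow> ('a \<Rightarrow> 'a \<Rightarrow> bool) \<Rightarrow> 'a letter list \<Rightarrow> 'a set" where
  "supp V E w = {v. \<exists>u. raag_eqv V E w u \<and> reduced V E u \<and> v \<in> fst ` set u}"

definition disj_commute :: "'a set \<Rightarrow> ('a \<Rightarrow> 'a \<Rightarrow> bool) \<Rightarrow> 'a letter list \<Rightarrow> 'a letter list \<Rightarrow> bool" where
  "disj_commute V E w1 w2 \<longleftrightarrow>
     supp V E w1 \<inter> supp V E w2 = {} \<and>
     (\<forall>v1 \<in> supp V E w1. \<forall>v2 \<in> supp V E w2. \<not> E v1 v2)"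

definition connected_in :: "('a \<Rightarrow> 'a \<Rightarrow> bool) \<Rightarrow> 'a set \<Rightarrow> bool" where
  "connected_in E A \<longleftrightarrow> A \<noteq> {} \<and>
     (\<forall>x \<in> A. \<forall>y \<in> A. (\<lambda>a b. a \<in> A \<and> b \<in> A \<and> E a b)\<^sup>*\<^sup>* x y)"

definition non_split :: "'a set \<Rightarrow> ('a \<Rightarrow> 'a \<Rightarrow> bool) \<Rightarrow> 'a letter list \<Rightarrow> bool" where
  "non_split V E w \<longleftrightarrow> connected_in E (supp V E w)"

definition strongly_non_split :: "'a set \<Rightarrow> ('a \<Rightarrow> 'a \<Rightarrow> bool) \<Rightarrow> 'a letter list \<Rightarrow> bool" where
  "strongly_non_split V E w \<longleftrightarrow> non_split V E w \<and>
     (\<forall>v \<in> V. \<not> disj_commute V E [(v, True)] w)"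

definition start_set :: "'a set \<Rightarrow> ('a \<Rightarrow> 'a \<Rightarrow> bool) \<Rightarrow> 'a letter list \<Rightarrow> 'a set" where
  "start_set V E w = {v. \<exists>u. raag_eqv V E w u \<and> reduced V E u \<and> u \<noteq> [] \<and> fst (hd u) = v}"

definition conical_apex :: "'a set \<Rightarrow> ('a \<Rightarrow> 'a \<Rightarrow> bool) \<Rightarrow> 'a letter list \<Rightarrow> 'a \<Rightarrow> bool" where
  "conical_apex V E w v0 \<longleftrightarrow> start_set V E w = {v0}"

definition conical :: "'a set \<Rightarrow> ('a \<Rightarrow> 'a \<Rightarrow> bool) \<Rightarrow> 'a letter list \<Rightarrow> bool" where
  "conical V E w \<longleftrightarrow> (\<exists>v0. conical_apex V E w v0)"

definition sd_conical :: "'a set \<Rightarrow> ('a \<Rightarrow> 'a \<Rightarrow> bool) \<Rightarrow> ('a::linorder) letter list \<Rightarrow> bool" where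
  "sd_conical V E w \<longleftrightarrow>
     (\<exists>v0. conical_apex V E w v0 \<and> (\<forall>v \<in> V. v < v0 \<longrightarrow> E v v0))"

definition initially_normal :: "'a set \<Rightarrow> ('a \<Rightarrow> 'a \<Rightarrow> bool) \<Rightarrow> ('a::linorder) letter list \<Rightarrow> bool" where
  "initially_normal V E w \<longleftrightarrow> reduced V E w \<and>
     (w = [] \<or> fst (hd w) = Max (start_set V E w))"

definition normal_word :: "'a set \<Rightarrow> ('a \<Rightarrow> 'a \<Rightarrow> bool) \<Rightarrow> ('a::linorder) letter list \<Rightarrow> bool" where
  "normal_word V E w \<longleftrightarrow> (\<forall>k. initially_normal V E (drop k w))"

definition sigma :: "'a set \<Rightarrow> ('a \<Rightarrow> 'a \<Rightarrow> bool) \<Rightarrow> ('a::linorder) letter list \<Rightarrow> 'a letter list" where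
  "sigma V E w = (THE u. raag_eqv V E w u \<and> normal_word V E u)"

end

(* Reduced words are handled through the reduction map: multiplying a word on the right by a
   letter x either appends x or deletes the last letter x^-1 that x can be shuffled next to.
   This map respects the defining relations up to shuffles, so a word is reduced iff it contains
   no subword x m x^-1 with m commuting with x, and two reduced words represent the same element
   iff they are shuffles of each other.  Hence supp(g) and S(g) can be read off any reduced word,
   and the CGW normal form is unique and obtained by repeatedly pulling the largest possible
   first letter to the front.

   If |g1 g2| = |g1| + |g2|, then sigma(g1) sigma(g2) is reduced.  (i) A generator can start
   s sigma(g2), for a suffix s of sigma(g1), only if it starts s or it is the apex v0 of g2 and
   commutes with all of s; in the latter case the first letter of s commutes with v0, so by
   SD-conicality it is larger than v0, and every suffix stays initially normal.
   (ii) Strong non-splitness of g1 says that supp(g1) dominates the graph.  Then no letter of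
   sigma(g2) can move in front of sigma(g1), so S(g1 g2) = S(g1), and supp(g1 g2), which is
   supp(g1) together with vertices adjacent to it, is connected and still dominating. *)

theory Submission
  imports Defs
begin

section \<open>Shuffles and the defining relations\<close>

lemma inv_letter_inv [simp]: "inv_letter (inv_letter x) = x"
  by (simp add: inv_letter_def)

lemma fst_inv_letter [simp]: "fst (inv_letter x) = fst x"
  by (simp add: inv_letter_def)

lemma inv_letter_eq_iff [simp]: "inv_letter x = inv_letter y \<longleftrightarrow> x = y"
  by (metis inv_letter_inv)

lemma word_over_simps [simp]:
  "word_over V []"
  "word_over V (x # u) \<longleftrightarrow> fst x \<in> V \<and> word_over V u"
  "word_over V (u @ w) \<longleftrightarrow> word_over V u \<and> word_over V w"
  by (auto simp: word_over_def)

lemma rtranclp_map: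
  assumes "R\<^sup>*\<^sup>* a b" and "\<And>a b. R a b \<Longrightarrow> S (f a) (f b)"
  shows "S\<^sup>*\<^sup>* (f a) (f b)"
  using assms(1) by induction (auto intro: rtranclp.rtrancl_into_rtrancl assms(2))

lemma append_eq_split_around:
  assumes "S @ T = p @ y # m @ z # q"
  obtains q' where "S = p @ y # m @ z # q'" "q = q' @ T"
  | p' where "T = p' @ y # m @ z # q" "p = S @ p'"
  | m1 m2 where "S = p @ y # m1" "T = m2 @ z # q" "m = m1 @ m2"
proof -
  obtain us where "S = p @ us \<and> us @ T = y # m @ z # q \<or> S @ us = p \<and> T = us @ y # m @ z # q"
    using assms append_eq_append_conv2[of S T p] by blast
  then show thesis
  proof (elim disjE conjE)
    assume S: "S = p @ us" and T: "us @ T = y # m @ z # q"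
    show thesis
    proof (cases us)
      case Nil
      then show thesis using that(2)[of "[]"] S T by simp
    next
      case (Cons u us')
      then have "us' @ T = m @ z # q" and S': "S = p @ y # us'" using S T by auto
      then obtain vs where "us' = m @ vs \<and> vs @ T = z # q \<or> us' @ vs = m \<and> T = vs @ z # q"
        using append_eq_append_conv2[of us' T m] by blast
      then show thesis
      proof (elim disjE conjE)
        assume "us' = m @ vs" "vs @ T = z # q"
        then show thesis using that(1,3) S' by (cases vs) auto
      qed (use that(3) S' in blast)
    qed
  qed (use that(2) in blast)
qed

definition commutes_past :: "('a \<Rightarrow> 'a \<Rightarrow> bool) \<Rightarrow> 'a \<Rightarrow> 'a letter list \<Rightarrow> bool" where
  "commutes_past E a m \<longleftrightarrow> (\<forall>y\<in>set m. fst y \<noteq> a \<and> \<not> E a (fst y))"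

lemma commutes_past_simps [simp]:
  "commutes_past E a []"
  "commutes_past E a (y # m) \<longleftrightarrow> fst y \<noteq> a \<and> \<not> E a (fst y) \<and> commutes_past E a m"
  "commutes_past E a (m @ m') \<longleftrightarrow> commutes_past E a m \<and> commutes_past E a m'"
  "commutes_past E a (rev m) \<longleftrightarrow> commutes_past E a m"
  by (auto simp: commutes_past_def)

definition shuffle_step :: "('a \<Rightarrow> 'a \<Rightarrow> bool) \<Rightarrow> 'a letter list \<Rightarrow> 'a letter list \<Rightarrow> bool" where
  "shuffle_step E u w \<longleftrightarrow> (\<exists>p q a b. fst a \<noteq> fst b \<and> \<not> E (fst a) (fst b) \<and>
     u = p @ a # b # q \<and> w = p @ b # a # q)"

abbreviation shuffle_eq :: "('a \<Rightarrow> 'a \<Rightarrow> bool) \<Rightarrow> 'a letter list \<Rightarrow> 'a letter list \<Rightarrow> bool" where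
  "shuffle_eq E \<equiv> (shuffle_step E)\<^sup>*\<^sup>*"

lemma shuffle_stepI:
  "fst a \<noteq> fst b \<Longrightarrow> \<not> E (fst a) (fst b) \<Longrightarrow> shuffle_step E (p @ a # b # q) (p @ b # a # q)"
  unfolding shuffle_step_def by blast

lemma shuffle_stepE:
  assumes "shuffle_step E u w"
  obtains p q a b where "fst a \<noteq> fst b" "\<not> E (fst a) (fst b)"
    "u = p @ a # b # q" "w = p @ b # a # q"
  using assms unfolding shuffle_step_def by blast

lemma shuffle_eq_append:
  "shuffle_eq E u w \<Longrightarrow> shuffle_eq E (p @ u @ q) (p @ w @ q)"
proof (erule rtranclp_map[where f = "\<lambda>u. p @ u @ q"])
  fix u w assume "shuffle_step E u w"
  then show "shuffle_step E (p @ u @ q) (p @ w @ q)"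
  proof (rule shuffle_stepE)
    fix p' q' a b
    assume "fst a \<noteq> fst b" "\<not> E (fst a) (fst b)" "u = p' @ a # b # q'" "w = p' @ b # a # q'"
    then show ?thesis using shuffle_stepI[of a b E "p @ p'" "q' @ q"] by simp
  qed
qed

lemma shuffle_eq_Cons: "shuffle_eq E u w \<Longrightarrow> shuffle_eq E (x # u) (x # w)"
  using shuffle_eq_append[of E u w "[x]" "[]"] by simp

lemma shuffle_eq_length: "shuffle_eq E u w \<Longrightarrow> length u = length w"
proof (induction rule: rtranclp_induct)
  case (step v w)
  then show ?case by (elim shuffle_stepE) auto
qed simp

lemma shuffle_eq_set: "shuffle_eq E u w \<Longrightarrow> set u = set w"
proof (induction rule: rtranclp_induct)
  case (step v w)
  then show ?case by (elim shuffle_stepE) auto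
qed simp

lemma raag_eqv_refl: "raag_eqv V E u u"
  by (simp add: raag_eqv_def)

lemma raag_eqv_sym: "raag_eqv V E u w \<Longrightarrow> raag_eqv V E w u"
  unfolding raag_eqv_def
  by (induction rule: rtranclp_induct) (auto intro: converse_rtranclp_into_rtranclp)

lemma raag_eqv_trans: "raag_eqv V E u w \<Longrightarrow> raag_eqv V E w z \<Longrightarrow> raag_eqv V E u z"
  unfolding raag_eqv_def by (rule rtranclp_trans)

lemma shuffle_eq_imp_raag_eqv: "shuffle_eq E u w \<Longrightarrow> raag_eqv V E u w"
  unfolding raag_eqv_def
proof (erule mono_rtranclp[rule_format, rotated])
  show "shuffle_step E u w \<Longrightarrow> raag_step V E u w \<or> raag_step V E w u" for u w
    unfolding raag_step_def shuffle_step_def by (intro disjI1 disjI2) simp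
qed

lemma raag_step_append:
  assumes "raag_step V E u w"
  shows "raag_step V E (p @ u @ q) (p @ w @ q)"
proof -
  from assms consider
      (cancel) p' q' x where "fst x \<in> V" "u = p' @ [x, inv_letter x] @ q'" "w = p' @ q'"
    | (swap) p' q' a b where "fst a \<noteq> fst b" "\<not> E (fst a) (fst b)"
        "u = p' @ [a, b] @ q'" "w = p' @ [b, a] @ q'"
    unfolding raag_step_def by blast
  then show ?thesis
  proof cases
    case cancel
    then show ?thesis unfolding raag_step_def
      by (intro disjI1 exI[of _ "p @ p'"] exI[of _ "q' @ q"] exI[of _ x]) simp
  next
    case swap
    then show ?thesis unfolding raag_step_def
      by (intro disjI2 exI[of _ "p @ p'"] exI[of _ "q' @ q"] exI[of _ a] exI[of _ b]) simp
  qed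
qed

lemma raag_eqv_append: "raag_eqv V E u w \<Longrightarrow> raag_eqv V E (p @ u @ q) (p @ w @ q)"
  unfolding raag_eqv_def
  by (erule rtranclp_map[where f = "\<lambda>u. p @ u @ q"]) (blast intro: raag_step_append)

lemma raag_eqv_concat:
  "raag_eqv V E u u' \<Longrightarrow> raag_eqv V E w w' \<Longrightarrow> raag_eqv V E (u @ w) (u' @ w')"
  using raag_eqv_append[of V E u u' "[]" w] raag_eqv_append[of V E w w' u' "[]"] raag_eqv_trans
  by fastforce

lemma raag_eqv_cancel: "fst x \<in> V \<Longrightarrow> raag_eqv V E (p @ x # inv_letter x # q) (p @ q)"
  unfolding raag_eqv_def raag_step_def
  by (intro r_into_rtranclp disjI1 exI[of _ p] exI[of _ q] exI[of _ x]) simp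

lemma raag_eqv_Cons_cancel:
  assumes "fst x \<in> V" "raag_eqv V E (x # r) (x # r')"
  shows "raag_eqv V E r r'"
proof -
  have "raag_eqv V E (inv_letter x # x # r) (inv_letter x # x # r')"
    using raag_eqv_append[OF assms(2), of "[inv_letter x]" "[]"] by simp
  moreover have "raag_eqv V E (inv_letter x # x # s) s" for s
    using raag_eqv_cancel[of "inv_letter x" V E "[]" s] assms(1) by simp
  ultimately show ?thesis
    using raag_eqv_sym raag_eqv_trans by meson
qed

lemma raag_eqv_word_over: "raag_eqv V E u w \<Longrightarrow> word_over V u \<Longrightarrow> word_over V w"
  unfolding raag_eqv_def
  by (induction rule: rtranclp_induct) (auto simp: raag_step_def)

locale raag =
  fixes V :: "'a set" and E :: "'a \<Rightarrow> 'a \<Rightarrow> bool"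
  assumes E_sym: "E x y \<Longrightarrow> E y x"
begin

lemma shuffle_step_sym: "shuffle_step E u w \<Longrightarrow> shuffle_step E w u"
  by (elim shuffle_stepE) (metis E_sym shuffle_stepI)

lemma shuffle_eq_sym: "shuffle_eq E u w \<Longrightarrow> shuffle_eq E w u"
  by (induction rule: rtranclp_induct)
    (auto intro: converse_rtranclp_into_rtranclp shuffle_step_sym)

lemma shuffle_step_rev: "shuffle_step E u w \<Longrightarrow> shuffle_step E (rev u) (rev w)"
proof (elim shuffle_stepE)
  fix p q a b assume "fst a \<noteq> fst b" "\<not> E (fst a) (fst b)"
    and "u = p @ a # b # q" "w = p @ b # a # q"
  then show ?thesis using shuffle_stepI[of b a E "rev q" "rev p"] E_sym by auto
qed

lemma shuffle_eq_rev: "shuffle_eq E u w \<Longrightarrow> shuffle_eq E (rev u) (rev w)"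
  by (erule rtranclp_map) (rule shuffle_step_rev)

lemma shuffle_eq_move_front: "commutes_past E (fst x) m \<Longrightarrow> shuffle_eq E (m @ [x]) (x # m)"
proof (induction m)
  case (Cons y m)
  then have "shuffle_eq E (y # m @ [x]) (y # x # m)"
    by (simp add: shuffle_eq_Cons)
  moreover have "shuffle_step E (y # x # m) (x # y # m)"
    using Cons.prems shuffle_stepI[of y x E "[]" m] E_sym by auto
  ultimately show ?case by simp
qed simp

end

section \<open>Reduction\<close>

fun cancel_first :: "('a \<Rightarrow> 'a \<Rightarrow> bool) \<Rightarrow> 'a letter \<Rightarrow> 'a letter list \<Rightarrow> 'a letter list option" where
  "cancel_first E x [] = None"
| "cancel_first E x (l # ls) =
     (if fst l = fst x then (if l = inv_letter x then Some ls else None)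
      else if E (fst x) (fst l) then None
      else map_option (Cons l) (cancel_first E x ls))"

(* cancel_first is applied to rev r, so that x meets the letters of r from the right. *)
definition mult_letter :: "('a \<Rightarrow> 'a \<Rightarrow> bool) \<Rightarrow> 'a letter list \<Rightarrow> 'a letter \<Rightarrow> 'a letter list" where
  "mult_letter E r x =
     (case cancel_first E x (rev r) of Some r' \<Rightarrow> rev r' | None \<Rightarrow> r @ [x])"

definition reduce :: "('a \<Rightarrow> 'a \<Rightarrow> bool) \<Rightarrow> 'a letter list \<Rightarrow> 'a letter list" where
  "reduce E w = foldl (mult_letter E) [] w"

lemma cancel_first_SomeD:
  "cancel_first E x R = Some R' \<Longrightarrow>
     \<exists>t s. R = t @ inv_letter x # s \<and> R' = t @ s \<and> commutes_past E (fst x) t"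
proof (induction R arbitrary: R')
  case (Cons l R)
  show ?case
  proof (cases "fst l = fst x")
    case True
    with Cons.prems have "l = inv_letter x" "R' = R" by (auto split: if_splits)
    then show ?thesis by (intro exI[of _ "[]"] exI[of _ R]) simp
  next
    case False
    with Cons.prems obtain R'' where "cancel_first E x R = Some R''" "R' = l # R''"
      "\<not> E (fst x) (fst l)"
      by (auto split: if_splits)
    with Cons.IH[of R''] False show ?thesis by (metis append_Cons commutes_past_simps(2))
  qed
qed simp

lemma cancel_first_append:
  "commutes_past E (fst x) t \<Longrightarrow>
     cancel_first E x (t @ s) = map_option ((@) t) (cancel_first E x s)"
  by (cases "cancel_first E x s"; induction t) auto

lemma mult_letter_cases:
  obtains (append) "cancel_first E x (rev r) = None" "mult_letter E r x = r @ [x]"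
  | (cancel) S T where "r = S @ inv_letter x # T" "commutes_past E (fst x) T"
      "mult_letter E r x = S @ T"
proof (cases "cancel_first E x (rev r)")
  case None
  then show thesis using append by (simp add: mult_letter_def)
next
  case (Some R)
  then obtain t s where ts: "rev r = t @ inv_letter x # s" "R = t @ s" "commutes_past E (fst x) t"
    using cancel_first_SomeD by blast
  then have "r = rev s @ inv_letter x # rev t"
    by (simp add: rev_swap)
  then show thesis using cancel Some ts by (simp add: mult_letter_def)
qed

lemma mult_letter_cancel:
  "commutes_past E (fst x) T \<Longrightarrow> mult_letter E (S @ inv_letter x # T) x = S @ T"
  using cancel_first_append[of E x "rev T" "inv_letter x # rev S"] by (simp add: mult_letter_def)

lemma length_mult_letter: "length (mult_letter E r x) \<le> Suc (length r)"
  by (cases rule: mult_letter_cases[of E x r]) auto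

lemma set_mult_letter: "set (mult_letter E r x) \<subseteq> set r \<union> {x}"
  by (cases rule: mult_letter_cases[of E x r]) auto

context raag
begin

lemma raag_eqv_mult_letter:
  assumes "fst x \<in> V"
  shows "raag_eqv V E (r @ [x]) (mult_letter E r x)"
proof (cases rule: mult_letter_cases[of E x r])
  case append
  then show ?thesis by (simp add: raag_eqv_refl)
next
  case (cancel S T)
  have "shuffle_eq E (S @ inv_letter x # T @ [x]) (S @ inv_letter x # x # T)"
    using shuffle_eq_append[OF shuffle_eq_move_front[OF cancel(2)], of "S @ [inv_letter x]" "[]"]
    by simp
  then have "raag_eqv V E (r @ [x]) (S @ inv_letter x # x # T)"
    using cancel(1) shuffle_eq_imp_raag_eqv by simp
  moreover have "raag_eqv V E (S @ inv_letter x # x # T) (S @ T)"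
    using raag_eqv_cancel[of "inv_letter x" V E S T] assms by simp
  ultimately show ?thesis using cancel(3) raag_eqv_trans by metis
qed

lemma cancel_first_shuffle_step:
  assumes "shuffle_step E R R'"
  shows "rel_option (shuffle_eq E) (cancel_first E x R) (cancel_first E x R')"
proof -
  obtain P Q a b where ab: "fst a \<noteq> fst b" "\<not> E (fst a) (fst b)" "\<not> E (fst b) (fst a)"
    and R: "R = P @ a # b # Q" "R' = P @ b # a # Q"
    using assms E_sym by (elim shuffle_stepE) blast
  have swap: "shuffle_step E (P' @ a # b # Q') (P' @ b # a # Q')" for P' Q'
    using ab(1,2) by (rule shuffle_stepI)
  show ?thesis unfolding R
  proof (induction P)
    case Nil
    show ?case
      using ab swap[of "[]"] by (cases "cancel_first E x Q") (auto simp: inv_letter_def)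
  next
    case (Cons l P)
    then show ?case
      using swap[of P]
      by (auto simp: option.rel_map elim: option.rel_mono_strong intro: shuffle_eq_Cons)
  qed
qed

lemma mult_letter_shuffle_eq:
  assumes "shuffle_eq E r r'"
  shows "shuffle_eq E (mult_letter E r x) (mult_letter E r' x)"
  using assms
proof (induction rule: rtranclp_induct)
  case (step r' r'')
  have "rel_option (shuffle_eq E) (cancel_first E x (rev r')) (cancel_first E x (rev r''))"
    using step(2) by (intro cancel_first_shuffle_step shuffle_step_rev)
  then have "shuffle_eq E (mult_letter E r' x) (mult_letter E r'' x)"
    using shuffle_eq_append[OF r_into_rtranclp[of "shuffle_step E", OF step(2)], of "[]" "[x]"]
    unfolding mult_letter_def
    by (cases "cancel_first E x (rev r')"; cases "cancel_first E x (rev r'')")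
      (auto intro: shuffle_eq_rev)
  with step(3) show ?case by (rule rtranclp_trans)
qed simp

lemma foldl_mult_letter_shuffle_eq:
  "shuffle_eq E r r' \<Longrightarrow> shuffle_eq E (foldl (mult_letter E) r z) (foldl (mult_letter E) r' z)"
  by (induction z arbitrary: r r') (auto intro: mult_letter_shuffle_eq)

lemma cancel_first_commute:
  assumes "fst a \<noteq> fst b" "\<not> E (fst a) (fst b)"
  shows "cancel_first E a R = Some R1 \<Longrightarrow> cancel_first E b R = Some R2 \<Longrightarrow>
    \<exists>R3. cancel_first E b R1 = Some R3 \<and> cancel_first E a R2 = Some R3"
proof (induction R arbitrary: R1 R2)
  case (Cons l R)
  then show ?case using assms E_sym by (auto split: if_splits) blast
qed simp

lemma cancel_first_None_preserved:
  assumes "fst a \<noteq> fst b" "\<not> E (fst a) (fst b)"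
  shows "cancel_first E a R = Some R1 \<Longrightarrow> cancel_first E b R = None \<Longrightarrow>
    cancel_first E b R1 = None"
proof (induction R arbitrary: R1)
  case (Cons l R)
  then show ?case using assms E_sym by (auto split: if_splits)
qed simp

lemma mult_letter_commute:
  assumes "fst a \<noteq> fst b" "\<not> E (fst a) (fst b)"
  shows "shuffle_eq E (mult_letter E (mult_letter E r a) b) (mult_letter E (mult_letter E r b) a)"
proof -
  have ba: "fst b \<noteq> fst a" "\<not> E (fst b) (fst a)"
    using assms E_sym by auto
  define R where "R = rev r"
  have a_past_b: "cancel_first E a (b # R) = map_option (Cons b) (cancel_first E a R)"
    and b_past_a: "cancel_first E b (a # R) = map_option (Cons a) (cancel_first E b R)"
    using assms ba by simp_all
  show ?thesis
  proof (cases "cancel_first E a R")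
    case a_None: None
    show ?thesis
    proof (cases "cancel_first E b R")
      case None
      then have "mult_letter E (mult_letter E r a) b = r @ [a, b]"
        "mult_letter E (mult_letter E r b) a = r @ [b, a]"
        using a_None a_past_b b_past_a by (simp_all add: mult_letter_def R_def)
      then show ?thesis using shuffle_stepI[of a b E r "[]", OF assms] by simp
    next
      case (Some R2)
      then have "cancel_first E a R2 = None"
        using cancel_first_None_preserved[OF ba Some a_None] by simp
      then show ?thesis
        using a_None Some b_past_a by (simp add: mult_letter_def R_def)
    qed
  next
    case a_Some: (Some R1)
    show ?thesis
    proof (cases "cancel_first E b R")
      case None
      then have "cancel_first E b R1 = None"
        using cancel_first_None_preserved[OF assms a_Some None] by simp
      then show ?thesis
        using a_Some None a_past_b by (simp add: mult_letter_def R_def)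
    next
      case (Some R2)
      then obtain R3 where "cancel_first E b R1 = Some R3" "cancel_first E a R2 = Some R3"
        using cancel_first_commute[OF assms a_Some] by blast
      then show ?thesis
        using a_Some Some by (simp add: mult_letter_def R_def)
    qed
  qed
qed

end

section \<open>Reduced words\<close>

definition cancellation_free :: "('a \<Rightarrow> 'a \<Rightarrow> bool) \<Rightarrow> 'a letter list \<Rightarrow> bool" where
  "cancellation_free E u \<longleftrightarrow>
     \<not> (\<exists>p x m q. u = p @ x # m @ inv_letter x # q \<and> commutes_past E (fst x) m)"

lemma cancellation_free_Nil [simp]: "cancellation_free E []"
  by (simp add: cancellation_free_def)

lemma cancellation_free_appendD:
  assumes "cancellation_free E (u @ v)"
  shows "cancellation_free E u" "cancellation_free E v"
  using assms unfolding cancellation_free_def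
  by (metis append.assoc append_Cons)+

lemma mult_letter_snoc:
  assumes "cancellation_free E (u @ [x])"
  shows "mult_letter E u x = u @ [x]"
proof (cases rule: mult_letter_cases[of E x u])
  case (cancel S T)
  then have "u @ [x] = S @ inv_letter x # T @ inv_letter (inv_letter x) # []"
    "commutes_past E (fst (inv_letter x)) T"
    by simp_all
  with assms show ?thesis unfolding cancellation_free_def by blast
qed simp

lemma reduce_append: "reduce E (u @ v) = foldl (mult_letter E) (reduce E u) v"
  by (simp add: reduce_def)

lemma reduce_cancellation_free: "cancellation_free E u \<Longrightarrow> reduce E u = u"
proof (induction u rule: rev_induct)
  case (snoc x u)
  then have "reduce E u = u"
    using cancellation_free_appendD(1) by blast
  then show ?case using snoc.prems mult_letter_snoc by (simp add: reduce_append)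
qed (simp add: reduce_def)

lemma length_reduce: "length (reduce E u) \<le> length u"
proof -
  have "length (foldl (mult_letter E) r z) \<le> length r + length z" for r z
  proof (induction z arbitrary: r)
    case (Cons x z)
    then show ?case using length_mult_letter[of E r x] by (simp add: le_trans[OF Cons.IH])
  qed simp
  from this[of "[]" u] show ?thesis unfolding reduce_def by simp
qed

lemma set_reduce: "set (reduce E u) \<subseteq> set u"
proof -
  have "set (foldl (mult_letter E) r z) \<subseteq> set r \<union> set z" for r z
  proof (induction z arbitrary: r)
    case (Cons x z)
    then show ?case using set_mult_letter[of E r x] by (fastforce simp: subset_iff)
  qed simp
  from this[of "[]" u] show ?thesis unfolding reduce_def by simp
qed

lemma word_over_reduce: "word_over V u \<Longrightarrow> word_over V (reduce E u)"
  using set_reduce unfolding word_over_def by fastforce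

context raag
begin

lemma cancellation_free_delete:
  assumes free: "cancellation_free E (S @ z # T)" and T: "commutes_past E (fst z) T"
  shows "cancellation_free E (S @ T)"
  unfolding cancellation_free_def
proof (intro notI, elim exE conjE)
  fix p y m q assume eq: "S @ T = p @ y # m @ inv_letter y # q"
    and m: "commutes_past E (fst y) m"
  have no_pattern: "S @ z # T \<noteq> p' @ y # m' @ inv_letter y # q'"
    if "commutes_past E (fst y) m'" for p' m' q'
    using free that unfolding cancellation_free_def by blast
  from eq show False
  proof (cases rule: append_eq_split_around)
    case (1 q')
    then show False using no_pattern[OF m, of p "q' @ z # T"] by simp
  next
    case (2 p')
    then show False using no_pattern[OF m, of "S @ z # p'" q] by simp
  next
    case (3 m1 m2)
    then have "fst y \<noteq> fst z" "\<not> E (fst y) (fst z)"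
      using T E_sym by auto
    then have "commutes_past E (fst y) (m1 @ z # m2)"
      using m 3 by simp
    then show False using no_pattern[of "m1 @ z # m2" p q] 3 by simp
  qed
qed

lemma cancellation_free_mult_letter:
  assumes free: "cancellation_free E r"
  shows "cancellation_free E (mult_letter E r x)"
proof (cases rule: mult_letter_cases[of E x r])
  case append
  show ?thesis
    unfolding append(2) cancellation_free_def
  proof (intro notI, elim exE conjE)
    fix p y m q assume eq: "r @ [x] = p @ y # m @ inv_letter y # q"
      and m: "commutes_past E (fst y) m"
    from eq show False
    proof (cases rule: append_eq_split_around)
      case (1 q')
      then show False using free m unfolding cancellation_free_def by blast
    next
      case (2 p')
      then show False by (simp add: Cons_eq_append_conv)
    next
      case (3 m1 m2)
      then have "x = inv_letter y" "r = p @ inv_letter x # m"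
        by (auto simp: Cons_eq_append_conv)
      then have "cancel_first E x (rev r) \<noteq> None"
        using m cancel_first_append[of E x "rev m" "inv_letter x # rev p"] by simp
      then show False using append(1) by simp
    qed
  qed
next
  case (cancel S T)
  then show ?thesis using free cancellation_free_delete by simp
qed

lemma mult_letter_inverse:
  assumes free: "cancellation_free E r"
  shows "shuffle_eq E (mult_letter E (mult_letter E r x) (inv_letter x)) r"
proof (cases rule: mult_letter_cases[of E x r])
  case append
  then show ?thesis using mult_letter_cancel[of E "inv_letter x" "[]" r] by simp
next
  case (cancel S T)
  have "cancel_first E (inv_letter x) (rev S) = None"
  proof (rule ccontr)
    assume "cancel_first E (inv_letter x) (rev S) \<noteq> None"
    then obtain t s where "rev S = t @ x # s" "commutes_past E (fst x) t"
      using cancel_first_SomeD by fastforce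
    then have "r = rev s @ x # rev t @ inv_letter x # T \<and> commutes_past E (fst x) (rev t)"
      using cancel(1) by (simp add: rev_swap)
    then show False using free unfolding cancellation_free_def by blast
  qed
  then have "cancel_first E (inv_letter x) (rev (S @ T)) = None"
    using cancel(2) cancel_first_append[of E "inv_letter x" "rev T" "rev S"] by simp
  then have "mult_letter E (S @ T) (inv_letter x) = S @ T @ [inv_letter x]"
    by (simp add: mult_letter_def)
  moreover have "shuffle_eq E (S @ T @ [inv_letter x]) (S @ inv_letter x # T)"
    using shuffle_eq_append[OF shuffle_eq_move_front, of "inv_letter x" T S "[]"] cancel(2)
    by simp
  ultimately show ?thesis using cancel by simp
qed

lemma cancellation_free_reduce: "cancellation_free E (reduce E u)"
proof -
  have "cancellation_free E r \<Longrightarrow> cancellation_free E (foldl (mult_letter E) r z)" for r z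
    by (induction z arbitrary: r) (auto intro: cancellation_free_mult_letter)
  then show ?thesis unfolding reduce_def by simp
qed

lemma raag_eqv_reduce:
  assumes "word_over V u"
  shows "raag_eqv V E u (reduce E u)"
proof -
  have "word_over V r \<Longrightarrow> word_over V z \<Longrightarrow> raag_eqv V E (r @ z) (foldl (mult_letter E) r z)"
    for r z
  proof (induction z arbitrary: r)
    case (Cons x z)
    have "raag_eqv V E ((r @ [x]) @ z) (mult_letter E r x @ z)"
      using raag_eqv_append[OF raag_eqv_mult_letter[of x r], of "[]" z] Cons.prems by simp
    moreover have "word_over V (mult_letter E r x)"
      using set_mult_letter[of E r x] Cons.prems unfolding word_over_def by auto
    ultimately show ?case
      using Cons raag_eqv_trans by fastforce
  qed (simp add: raag_eqv_refl)
  from this[of "[]" u] show ?thesis using assms unfolding reduce_def by simp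
qed

lemma raag_eqv_imp_shuffle_eq_reduce:
  assumes "raag_eqv V E u w"
  shows "shuffle_eq E (reduce E u) (reduce E w)"
proof -
  have step: "shuffle_eq E (reduce E u) (reduce E w)" if "raag_step V E u w" for u w
    using that unfolding raag_step_def
  proof (elim disjE exE conjE)
    fix p q x assume "u = p @ [x, inv_letter x] @ q" "w = p @ q"
    then show ?thesis
      using foldl_mult_letter_shuffle_eq[OF mult_letter_inverse[OF cancellation_free_reduce]]
      by (simp add: reduce_append)
  next
    fix p q a b assume "fst a \<noteq> fst b" "\<not> E (fst a) (fst b)"
      "u = p @ [a, b] @ q" "w = p @ [b, a] @ q"
    then show ?thesis
      using foldl_mult_letter_shuffle_eq[OF mult_letter_commute] by (simp add: reduce_append)
  qed
  from assms show ?thesis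
    unfolding raag_eqv_def
    by (induction rule: rtranclp_induct) (blast intro: step shuffle_eq_sym rtranclp_trans)+
qed

lemma wlen_eq_length_reduce:
  assumes "word_over V w"
  shows "wlen V E w = length (reduce E w)"
  unfolding wlen_def
proof (rule Least_equality)
  show "\<exists>u. word_over V u \<and> raag_eqv V E w u \<and> length u = length (reduce E w)"
    using assms word_over_reduce raag_eqv_reduce by blast
next
  fix n assume "\<exists>u. word_over V u \<and> raag_eqv V E w u \<and> length u = n"
  then obtain u where "raag_eqv V E w u" "length u = n" by blast
  then show "length (reduce E w) \<le> n"
    using raag_eqv_imp_shuffle_eq_reduce shuffle_eq_length length_reduce[of E u] by metis
qed

lemma wlen_raag_eqv:
  assumes "raag_eqv V E w u" "word_over V w"
  shows "wlen V E w = wlen V E u"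
proof -
  have "word_over V u" using assms by (rule raag_eqv_word_over)
  then show ?thesis
    using assms shuffle_eq_length[OF raag_eqv_imp_shuffle_eq_reduce[OF assms(1)]]
    by (simp add: wlen_eq_length_reduce)
qed

lemma reduced_iff_cancellation_free: "reduced V E u \<longleftrightarrow> word_over V u \<and> cancellation_free E u"
proof
  assume "word_over V u \<and> cancellation_free E u"
  then show "reduced V E u"
    unfolding reduced_def by (simp add: wlen_eq_length_reduce reduce_cancellation_free)
next
  assume "reduced V E u"
  then have over: "word_over V u" and len: "length u = length (reduce E u)"
    unfolding reduced_def by (auto simp: wlen_eq_length_reduce)
  have "cancellation_free E u"
    unfolding cancellation_free_def
  proof (intro notI, elim exE conjE)
    fix p x m q assume u: "u = p @ x # m @ inv_letter x # q" and m: "commutes_past E (fst x) m"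
    have "shuffle_eq E u ((p @ m) @ x # inv_letter x # q)"
      using shuffle_eq_append[OF shuffle_eq_sym[OF shuffle_eq_move_front[OF m]],
          of p "inv_letter x # q"] u
      by simp
    then have "raag_eqv V E u (p @ m @ q)"
      using raag_eqv_cancel[of x V E "p @ m" q] over u shuffle_eq_imp_raag_eqv raag_eqv_trans
      by fastforce
    then have "length (reduce E u) \<le> length (p @ m @ q)"
      using raag_eqv_imp_shuffle_eq_reduce shuffle_eq_length length_reduce by metis
    then show False using len u by simp
  qed
  then show "word_over V u \<and> cancellation_free E u" using over by simp
qed

lemma reduced_raag_eqv_imp_shuffle_eq:
  assumes "reduced V E u" "reduced V E w" "raag_eqv V E u w"
  shows "shuffle_eq E u w"
  using raag_eqv_imp_shuffle_eq_reduce[OF assms(3)] assms(1,2)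
  by (simp add: reduced_iff_cancellation_free reduce_cancellation_free)

lemma reduced_shuffle_eq:
  assumes "reduced V E u" "shuffle_eq E u w"
  shows "reduced V E w"
proof -
  have "word_over V u" "length u = wlen V E u"
    using assms(1) unfolding reduced_def by auto
  moreover have "wlen V E u = wlen V E w"
    using wlen_raag_eqv shuffle_eq_imp_raag_eqv assms(2) \<open>word_over V u\<close> by blast
  ultimately show ?thesis
    using shuffle_eq_set[OF assms(2)] shuffle_eq_length[OF assms(2)]
    unfolding reduced_def word_over_def by simp
qed

lemma reduced_suffix: "reduced V E (u @ v) \<Longrightarrow> reduced V E v"
  using cancellation_free_appendD(2) by (auto simp: reduced_iff_cancellation_free)

lemma reduced_reduce: "word_over V w \<Longrightarrow> reduced V E (reduce E w)"
  by (simp add: reduced_iff_cancellation_free word_over_reduce cancellation_free_reduce)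

end

section \<open>Start sets, supports and strong non-splitness\<close>

fun first_gens :: "('a \<Rightarrow> 'a \<Rightarrow> bool) \<Rightarrow> 'a letter list \<Rightarrow> 'a set" where
  "first_gens E [] = {}"
| "first_gens E (x # r) = insert (fst x) {y \<in> first_gens E r. y \<noteq> fst x \<and> \<not> E (fst x) y}"

lemma first_gens_append:
  "first_gens E (s @ t) =
     first_gens E s \<union> {y \<in> first_gens E t. \<forall>z\<in>set s. y \<noteq> fst z \<and> \<not> E (fst z) y}"
  by (induction s) auto

lemma first_gens_subset: "first_gens E u \<subseteq> fst ` set u"
  by (induction u) auto

lemma finite_first_gens: "finite (first_gens E u)"
  by (rule finite_subset[OF first_gens_subset]) simp

lemma find_shuffle_eq:
  "shuffle_eq E u w \<Longrightarrow> find (\<lambda>l. fst l = c) u = find (\<lambda>l. fst l = c) w"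
proof (induction rule: rtranclp_induct)
  case (step v w)
  from step(2) show ?case
  proof (rule shuffle_stepE)
    fix p q a b assume ab: "fst a \<noteq> fst b" and "v = p @ a # b # q" "w = p @ b # a # q"
    moreover have "find (\<lambda>l. fst l = c) (p @ a # b # q) = find (\<lambda>l. fst l = c) (p @ b # a # q)"
      using ab by (induction p) auto
    ultimately show ?case using step(3) by simp
  qed
qed simp

definition dominates :: "('a \<Rightarrow> 'a \<Rightarrow> bool) \<Rightarrow> 'a set \<Rightarrow> 'a set \<Rightarrow> bool" where
  "dominates E A B \<longleftrightarrow> (\<forall>b\<in>B. b \<in> A \<or> (\<exists>a\<in>A. E b a))"

context raag
begin

lemma first_gens_shuffle_eq: "shuffle_eq E u w \<Longrightarrow> first_gens E u = first_gens E w"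
proof (induction rule: rtranclp_induct)
  case (step v w)
  from step(2) show ?case
  proof (rule shuffle_stepE)
    fix p q a b assume ab: "fst a \<noteq> fst b" "\<not> E (fst a) (fst b)"
      and "v = p @ a # b # q" "w = p @ b # a # q"
    moreover have "first_gens E (a # b # q) = first_gens E (b # a # q)"
      using ab E_sym by auto
    ultimately show ?case
      using step(3) first_gens_append[of E p] by auto
  qed
qed simp

lemma first_gens_move_front:
  "y \<in> first_gens E u \<Longrightarrow> \<exists>l u'. shuffle_eq E u (l # u') \<and> fst l = y"
proof (induction u)
  case (Cons x r)
  show ?case
  proof (cases "y = fst x")
    case False
    with Cons.prems have y: "y \<in> first_gens E r" "\<not> E (fst x) y" by auto
    then obtain l r' where lr: "shuffle_eq E r (l # r')" "fst l = y"
      using Cons.IH by blast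
    have "shuffle_step E (x # l # r') (l # x # r')"
      using shuffle_stepI[of x l E "[]" r'] False y lr by simp
    then show ?thesis using shuffle_eq_Cons[OF lr(1), of x] lr(2)
      by (metis rtranclp.rtrancl_into_rtrancl)
  qed blast
qed simp

lemma supp_eq_set:
  assumes "word_over V w" "reduced V E u" "raag_eqv V E w u"
  shows "supp V E w = fst ` set u"
proof -
  have "set u' = set u" if "raag_eqv V E w u'" "reduced V E u'" for u'
    using that assms raag_eqv_sym raag_eqv_trans reduced_raag_eqv_imp_shuffle_eq shuffle_eq_set
    by metis
  then show ?thesis unfolding supp_def using assms by blast
qed

lemma start_set_eq_first_gens:
  assumes "word_over V w" "reduced V E u" "raag_eqv V E w u"
  shows "start_set V E w = first_gens E u"
proof -
  have "first_gens E u' = first_gens E u" if "raag_eqv V E w u'" "reduced V E u'" for u'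
    using that assms raag_eqv_sym raag_eqv_trans reduced_raag_eqv_imp_shuffle_eq
      first_gens_shuffle_eq
    by metis
  moreover have "\<exists>u'. raag_eqv V E w u' \<and> reduced V E u' \<and> u' \<noteq> [] \<and> fst (hd u') = v"
    if v: "v \<in> first_gens E u" for v
  proof -
    obtain l u' where lu': "shuffle_eq E u (l # u')" "fst l = v"
      using first_gens_move_front[OF v] by blast
    then have "raag_eqv V E w (l # u')"
      using assms(3) raag_eqv_trans shuffle_eq_imp_raag_eqv by blast
    then show ?thesis
      using assms(2) lu' reduced_shuffle_eq by (intro exI[of _ "l # u'"]) auto
  qed
  ultimately show ?thesis
    unfolding start_set_def by (fastforce simp: neq_Nil_conv)
qed

lemma start_set_reduced: "reduced V E u \<Longrightarrow> start_set V E u = first_gens E u"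
  using start_set_eq_first_gens raag_eqv_refl unfolding reduced_def by blast

lemma supp_letter:
  assumes "v \<in> V"
  shows "supp V E [(v, True)] = {v}"
proof -
  have "cancellation_free E [(v, True)]"
    unfolding cancellation_free_def by (auto simp: Cons_eq_append_conv)
  then show ?thesis
    using supp_eq_set[of "[(v, True)]" "[(v, True)]", OF _ _ raag_eqv_refl] assms
    by (simp add: reduced_iff_cancellation_free)
qed

lemma strongly_non_split_iff:
  "strongly_non_split V E w \<longleftrightarrow> connected_in E (supp V E w) \<and> dominates E (supp V E w) V"
proof -
  have "\<not> disj_commute V E [(v, True)] w \<longleftrightarrow> v \<in> supp V E w \<or> (\<exists>s\<in>supp V E w. E v s)"
    if "v \<in> V" for v
    unfolding disj_commute_def supp_letter[OF that] by blast
  then show ?thesis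
    unfolding strongly_non_split_def non_split_def dominates_def by blast
qed

lemma first_gens_append_dominated:
  assumes "dominates E (fst ` set s) (fst ` set t)"
  shows "first_gens E (s @ t) = first_gens E s"
  using assms first_gens_subset[of E t] E_sym
  unfolding first_gens_append dominates_def by fastforce

lemma connected_in_Un_dominated:
  assumes A: "connected_in E A" and AB: "dominates E A B"
  shows "connected_in E (A \<union> B)"
  unfolding connected_in_def
proof (intro conjI ballI)
  show "A \<union> B \<noteq> {}" using A unfolding connected_in_def by blast
  let ?R = "\<lambda>a b. a \<in> A \<union> B \<and> b \<in> A \<union> B \<and> E a b"
  have near: "\<exists>a\<in>A. ?R\<^sup>*\<^sup>* z a \<and> ?R\<^sup>*\<^sup>* a z" if z: "z \<in> A \<union> B" for z
  proof (cases "z \<in> A")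
    case False
    then obtain a where "a \<in> A" "E z a" using z AB unfolding dominates_def by blast
    then show ?thesis using z E_sym by (blast intro: r_into_rtranclp)
  qed blast
  fix x y assume "x \<in> A \<union> B" "y \<in> A \<union> B"
  then obtain a b where "a \<in> A" "?R\<^sup>*\<^sup>* x a" "b \<in> A" "?R\<^sup>*\<^sup>* b y"
    using near by meson
  moreover have "?R\<^sup>*\<^sup>* a b"
    using A \<open>a \<in> A\<close> \<open>b \<in> A\<close> unfolding connected_in_def
    by (blast intro: mono_rtranclp[rule_format, rotated])
  ultimately show "?R\<^sup>*\<^sup>* x y" by (meson rtranclp_trans)
qed

end

section \<open>CGW normal forms\<close>

locale ordered_raag = raag V E for V :: "'a::linorder set" and E
begin

lemma normal_word_Nil: "normal_word V E []"
  unfolding normal_word_def initially_normal_def by (simp add: reduced_iff_cancellation_free)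

lemma normal_word_Cons:
  "normal_word V E (x # r) \<longleftrightarrow> initially_normal V E (x # r) \<and> normal_word V E r"
  unfolding normal_word_def by (metis drop0 drop_Suc_Cons not0_implies_Suc)

lemma normal_word_reduced: "normal_word V E u \<Longrightarrow> reduced V E u"
  unfolding normal_word_def initially_normal_def by (metis drop0)

lemma initially_normal_Cons:
  "initially_normal V E (x # r) \<longleftrightarrow> reduced V E (x # r) \<and> fst x = Max (first_gens E (x # r))"
  unfolding initially_normal_def using start_set_reduced by auto

lemma normal_word_unique:
  "normal_word V E u \<Longrightarrow> normal_word V E u' \<Longrightarrow> shuffle_eq E u u' \<Longrightarrow> u = u'"
proof (induction u arbitrary: u')
  case Nil
  then show ?case using shuffle_eq_length by fastforce
next
  case (Cons x r)
  obtain x' r' where u': "u' = x' # r'"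
    using shuffle_eq_length[OF Cons.prems(3)] by (cases u') auto
  have "fst x = Max (first_gens E (x # r))" "fst x' = Max (first_gens E (x' # r'))"
    using Cons.prems(1,2) u' by (simp_all add: normal_word_Cons initially_normal_Cons)
  then have "fst x = fst x'"
    using first_gens_shuffle_eq[OF Cons.prems(3)] u' by simp
  then have x': "x' = x"
    using find_shuffle_eq[OF Cons.prems(3), of "fst x"] u' by simp
  have "fst x \<in> V"
    using normal_word_reduced[OF Cons.prems(1)] unfolding reduced_def by simp
  then have "raag_eqv V E r r'"
    using raag_eqv_Cons_cancel shuffle_eq_imp_raag_eqv Cons.prems(3) u' x' by blast
  moreover have "normal_word V E r" "normal_word V E r'"
    using Cons.prems u' by (simp_all add: normal_word_Cons)
  ultimately have "r = r'"
    using Cons.IH normal_word_reduced reduced_raag_eqv_imp_shuffle_eq by blast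
  then show ?case using u' x' by simp
qed

lemma normal_word_exists: "reduced V E u \<Longrightarrow> \<exists>u'. shuffle_eq E u u' \<and> normal_word V E u'"
proof (induction "length u" arbitrary: u rule: less_induct)
  case less
  show ?case
  proof (cases "u = []")
    case True
    then show ?thesis using normal_word_Nil by blast
  next
    case False
    define m where "m = Max (first_gens E u)"
    have "m \<in> first_gens E u"
      unfolding m_def using False by (intro Max_in finite_first_gens) (cases u; simp)
    then obtain l r where lr: "shuffle_eq E u (l # r)" "fst l = m"
      using first_gens_move_front by blast
    then have "reduced V E r"
      using reduced_shuffle_eq[OF less.prems] reduced_suffix[of "[l]" r] by simp
    moreover have "length r < length u"
      using shuffle_eq_length[OF lr(1)] by simp
    ultimately obtain r' where r': "shuffle_eq E r r'" "normal_word V E r'"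
      using less.hyps by blast
    have u: "shuffle_eq E u (l # r')"
      using lr(1) shuffle_eq_Cons[OF r'(1)] by (rule rtranclp_trans)
    then have "reduced V E (l # r')" "first_gens E (l # r') = first_gens E u"
      using reduced_shuffle_eq[OF less.prems] first_gens_shuffle_eq by auto
    then have "normal_word V E (l # r')"
      using r'(2) lr(2) m_def by (simp add: normal_word_Cons initially_normal_Cons)
    then show ?thesis using u by blast
  qed
qed

lemma sigma_eqI:
  assumes "normal_word V E u" "raag_eqv V E w u"
  shows "sigma V E w = u"
  unfolding sigma_def
proof (rule the_equality)
  fix u' assume u': "raag_eqv V E w u' \<and> normal_word V E u'"
  then have "raag_eqv V E u' u"
    using assms raag_eqv_sym raag_eqv_trans by blast
  then show "u' = u"
    using assms u' normal_word_unique normal_word_reduced reduced_raag_eqv_imp_shuffle_eq by blast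
qed (use assms in blast)

lemma sigma_normal_form:
  assumes "word_over V w"
  shows "normal_word V E (sigma V E w)" "raag_eqv V E w (sigma V E w)"
proof -
  obtain u where u: "shuffle_eq E (reduce E w) u" "normal_word V E u"
    using normal_word_exists reduced_reduce assms by blast
  have "raag_eqv V E w u"
    using raag_eqv_reduce[OF assms] shuffle_eq_imp_raag_eqv[OF u(1)] raag_eqv_trans by blast
  then show "normal_word V E (sigma V E w)" "raag_eqv V E w (sigma V E w)"
    using sigma_eqI u(2) by simp_all
qed

end

section \<open>Geodesic products with an SD-conical factor\<close>

context ordered_raag
begin

lemma reduced_sigma_append:
  assumes "word_over V w1" "word_over V w2"
    and "wlen V E (w1 @ w2) = wlen V E w1 + wlen V E w2"
  shows "reduced V E (sigma V E w1 @ sigma V E w2)"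
proof -
  let ?s1 = "sigma V E w1" and ?s2 = "sigma V E w2"
  have r: "reduced V E ?s1" "reduced V E ?s2"
    using assms sigma_normal_form normal_word_reduced by blast+
  have e: "raag_eqv V E w1 ?s1" "raag_eqv V E w2 ?s2"
    using assms sigma_normal_form by blast+
  have "length (?s1 @ ?s2) = wlen V E w1 + wlen V E w2"
    using r e assms wlen_raag_eqv unfolding reduced_def by simp
  also have "\<dots> = wlen V E (?s1 @ ?s2)"
    using assms wlen_raag_eqv[OF raag_eqv_concat[OF e]] by simp
  finally show ?thesis using r unfolding reduced_def by simp
qed

lemma normal_word_append:
  assumes "normal_word V E s" "normal_word V E t" "reduced V E (s @ t)"
    and "first_gens E t \<subseteq> {v0}" and "\<forall>v\<in>V. v < v0 \<longrightarrow> E v v0"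
  shows "normal_word V E (s @ t)"
  using assms(1,3)
proof (induction s)
  case Nil
  then show ?case using assms(2) by simp
next
  case (Cons x s)
  have x: "reduced V E (x # s)" "fst x = Max (first_gens E (x # s))"
    and s: "normal_word V E s"
    using Cons.prems(1) by (simp_all add: normal_word_Cons initially_normal_Cons)
  have "fst x \<in> V"
    using x(1) unfolding reduced_def by simp
  have "Max (first_gens E (x # s @ t)) = fst x"
  proof (rule Max_eqI)
    fix y assume "y \<in> first_gens E (x # s @ t)"
    then consider "y \<in> first_gens E (x # s)" | "y = v0" "y \<noteq> fst x" "\<not> E (fst x) y"
      using first_gens_append[of E "x # s" t] assms(4) by (auto simp del: first_gens.simps)
    then show "y \<le> fst x"
    proof cases
      case 1
      then show ?thesis using x(2) Max_ge[OF finite_first_gens] by metis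
    next
      case 2
      then have "\<not> fst x < v0" using assms(5) \<open>fst x \<in> V\<close> by blast
      then show ?thesis using 2 by simp
    qed
  qed (simp_all add: finite_first_gens)
  moreover have "normal_word V E (s @ t)"
    using Cons.IH s reduced_suffix[of "[x]" "s @ t"] Cons.prems(2) by simp
  ultimately show ?case
    using Cons.prems(2) by (simp add: normal_word_Cons initially_normal_Cons)
qed

lemma sigma_append_sd_conical:
  assumes w: "word_over V w1" "word_over V w2"
    and len: "wlen V E (w1 @ w2) = wlen V E w1 + wlen V E w2"
    and sd: "sd_conical V E w2"
  shows "sigma V E (w1 @ w2) = sigma V E w1 @ sigma V E w2"
proof -
  obtain v0 where v0: "start_set V E w2 = {v0}" "\<forall>v\<in>V. v < v0 \<longrightarrow> E v v0"
    using sd unfolding sd_conical_def conical_apex_def by blast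
  have "first_gens E (sigma V E w2) = {v0}"
    using v0(1) start_set_eq_first_gens w(2) sigma_normal_form normal_word_reduced by metis
  then have "normal_word V E (sigma V E w1 @ sigma V E w2)"
    using normal_word_append reduced_sigma_append[OF w len] sigma_normal_form w v0(2) by simp
  moreover have "raag_eqv V E (w1 @ w2) (sigma V E w1 @ sigma V E w2)"
    using raag_eqv_concat sigma_normal_form w by blast
  ultimately show ?thesis by (rule sigma_eqI)
qed

lemma sd_conical_strongly_non_split_append:
  assumes w: "word_over V w1" "word_over V w2"
    and len: "wlen V E (w1 @ w2) = wlen V E w1 + wlen V E w2"
    and sd: "sd_conical V E w1" and sns: "strongly_non_split V E w1"
  shows "sd_conical V E (w1 @ w2) \<and> strongly_non_split V E (w1 @ w2)"
proof -
  let ?s1 = "sigma V E w1" and ?s2 = "sigma V E w2"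
  have r: "reduced V E ?s1" "reduced V E ?s2" "reduced V E (?s1 @ ?s2)"
    using w sigma_normal_form normal_word_reduced reduced_sigma_append[OF w len] by blast+
  have e: "raag_eqv V E w1 ?s1" "raag_eqv V E (w1 @ w2) (?s1 @ ?s2)"
    using w sigma_normal_form raag_eqv_concat by blast+
  have supp: "supp V E w1 = fst ` set ?s1" "supp V E (w1 @ w2) = fst ` set ?s1 \<union> fst ` set ?s2"
    using supp_eq_set[OF _ r(1) e(1)] supp_eq_set[OF _ r(3) e(2)] w by auto
  have "fst ` set ?s2 \<subseteq> V"
    using r(2) unfolding reduced_def word_over_def by blast
  moreover have dom: "dominates E (fst ` set ?s1) V" and con: "connected_in E (fst ` set ?s1)"
    using sns supp(1) by (simp_all add: strongly_non_split_iff)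
  ultimately have dom2: "dominates E (fst ` set ?s1) (fst ` set ?s2)"
    unfolding dominates_def by blast
  have "start_set V E (w1 @ w2) = start_set V E w1"
    using start_set_eq_first_gens[OF _ r(3) e(2)] start_set_eq_first_gens[OF _ r(1) e(1)] w
      first_gens_append_dominated[OF dom2] by simp
  then have "sd_conical V E (w1 @ w2)"
    using sd unfolding sd_conical_def conical_apex_def by simp
  moreover have "connected_in E (supp V E (w1 @ w2))"
    using connected_in_Un_dominated[OF con dom2] supp(2) by simp
  moreover have "dominates E (supp V E (w1 @ w2)) V"
    using dom supp(2) unfolding dominates_def by blast
  ultimately show ?thesis by (simp add: strongly_non_split_iff)
qed

end

theorem lemma2p9:
  fixes V :: "('a::linorder) set" and E :: "'a \<Rightarrow> 'a \<Rightarrow> bool"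
    and w1 w2 :: "'a letter list"
  assumes "finite V"
    and "\<And>x y. E x y \<Longrightarrow> E y x"
    and "\<And>x. \<not> E x x"
    and "\<And>x y. E x y \<Longrightarrow> x \<in> V \<and> y \<in> V"
    and "word_over V w1" and "word_over V w2"
    and "wlen V E (w1 @ w2) = wlen V E w1 + wlen V E w2"
  shows "(sd_conical V E w2 \<longrightarrow> sigma V E (w1 @ w2) = sigma V E w1 @ sigma V E w2)
       \<and> (sd_conical V E w1 \<and> strongly_non_split V E w1 \<longrightarrow>
            sd_conical V E (w1 @ w2) \<and> strongly_non_split V E (w1 @ w2))"
proof -
  interpret ordered_raag V E
    using assms(2) by unfold_locales
  show ?thesis
    using sigma_append_sd_conical[OF assms(5-7)]
      sd_conical_strongly_non_split_append[OF assms(5-7)] by blast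
qed

end
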